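(* Let $(\Omega,\mathcal A)$ be a measurable space and let $f$ be a random holomorphic function on the polydisc $\mathbb D^n=\{z\in\mathbb C^n:|z_j|<1,\ j=1,\dots,n\}$. Then $f$ is the sum of a random power series: there are measurable functions $a_\alpha:\Omega\to\mathbb C$, $\alpha\in(\mathbb N\cup\{0\})^n$, such that $f(\omega,z)=\sum_\alpha a_\alpha(\omega)z^\alpha$ for all $\omega\in\Omega$ and $z\in\mathbb D^n$.
   Context: A random holomorphic function on an open set $U\subset\mathbb C^n$ is a function $f:\Omega\times U\to\mathbb C$ such that $f(\omega,\cdot)$ is holomorphic for each $\omega\in\Omega$ and $f(\cdot,z)$ is measurable for each $z\in U$. A random power series is an expression $\sum_\alpha a_\alpha(\omega)z^\alpha$ with each coefficient $a_\alpha$ measurable. *)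

theory Defs
  imports "HOL-Analysis.Analysis"
begin

definition holomorphic_n_on :: "(complex^'n \<Rightarrow> complex) \<Rightarrow> (complex^'n) set \<Rightarrow> bool" where
  "holomorphic_n_on g U \<longleftrightarrow>
     (\<forall>z\<in>U. \<exists>L. (g has_derivative L) (at z) \<and> (\<forall>c v. L (c *s v) = c * L v))"

definition polydisc :: "(complex^'n) set" where
  "polydisc = {z. \<forall>j. norm (z $ j) < 1}"

definition random_holomorphic ::
    "'w measure \<Rightarrow> (complex^'n) set \<Rightarrow> ('w \<Rightarrow> complex^'n \<Rightarrow> complex) \<Rightarrow> bool" where
  "random_holomorphic M U f \<longleftrightarrow>
     (\<forall>\<omega>\<in>space M. holomorphic_n_on (f \<omega>) U) \<and>
     (\<forall>z\<in>U. (\<lambda>\<omega>. f \<omega> z) \<in> borel_measurable M)"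

definition monomial_n :: "complex^'n \<Rightarrow> nat^'n \<Rightarrow> complex" where
  "monomial_n z \<alpha> = (\<Prod>j\<in>UNIV. (z $ j) ^ (\<alpha> $ j))"

end

theory Submission
  imports Defs "HOL-Complex_Analysis.Complex_Analysis"
begin

(* Freeze all coordinates but z_i: the slice w \<mapsto> h(z with z_i := w) is holomorphic in the unit
   disc, so h(z) = \<Sum>\<^sub>k c\<^sub>k(z) z_i^k with c\<^sub>k(z) the Taylor coefficients of the slice at 0. By the
   Cauchy estimates, c\<^sub>k is the limit as t \<rightarrow> 0, uniform on compact polydiscs, of the quotient
   (h(z with z_i := t) - \<Sum>\<^sub>m\<^sub><\<^sub>k c\<^sub>m(z) t^m) / t^k. Continuity, holomorphy in the other variables
   and measurability in \<omega> survive such limits, so c\<^sub>k inherits them and the expansion can be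
   iterated over all coordinates. The Cauchy estimates also give a geometric majorant, which
   allows summing over all multi-indices at once; the resulting coefficients are independent of
   z, since each step removes the dependence on one coordinate. *)

definition vec_upd :: "'a^'n \<Rightarrow> 'n \<Rightarrow> 'a \<Rightarrow> 'a^'n" where
  "vec_upd z i w = (\<chi> j. if j = i then w else z $ j)"

lemma vec_upd_nth [simp]: "vec_upd z i w $ j = (if j = i then w else z $ j)"
  by (simp add: vec_upd_def)

lemma vec_upd_upd_same [simp]: "vec_upd (vec_upd z i v) i w = vec_upd z i w"
  by (simp add: vec_eq_iff)

lemma vec_upd_upd_commute: "i \<noteq> j \<Longrightarrow> vec_upd (vec_upd z i v) j w = vec_upd (vec_upd z j w) i v"
  by (simp add: vec_eq_iff)

lemma vec_upd_nth_self [simp]: "vec_upd z i (z $ i) = z"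
  by (simp add: vec_eq_iff)

lemma continuous_on_vec_upd [continuous_intros]:
  assumes "continuous_on S g" "continuous_on S h"
  shows "continuous_on S (\<lambda>x. vec_upd (g x) i (h x))"
  unfolding vec_upd_def
proof (intro continuous_on_vec_lambda)
  fix j show "continuous_on S (\<lambda>x. if j = i then h x else g x $ j)"
    using assms by (cases "j = i") (auto intro: continuous_intros)
qed

lemma has_derivative_vec_upd:
  fixes z :: "complex^'n"
  shows "((\<lambda>w. vec_upd z i w) has_derivative (\<lambda>w. w *s axis i 1)) (at w0)"
proof -
  have affine: "vec_upd z i = (\<lambda>w. w *s axis i 1 + vec_upd z i 0)"
    by (simp add: fun_eq_iff vec_eq_iff axis_def)
  have "linear (\<lambda>w::complex. w *s axis i (1::complex))"
    by (auto simp: vec_eq_iff algebra_simps intro!: linearI)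
  then have "((\<lambda>w. w *s axis i 1 + vec_upd z i 0) has_derivative (\<lambda>w. w *s axis i 1)) (at w0)"
    by (intro has_derivative_add_const linear_imp_has_derivative)
  then show ?thesis
    by (subst affine)
qed

definition pball :: "real \<Rightarrow> (complex^'n) set" where
  "pball r = {z. \<forall>j. norm (z $ j) < r}"

definition pcball :: "real \<Rightarrow> (complex^'n) set" where
  "pcball r = {z. \<forall>j. norm (z $ j) \<le> r}"

lemma vec_upd_in_polydisc: "z \<in> polydisc \<Longrightarrow> norm w < 1 \<Longrightarrow> vec_upd z i w \<in> polydisc"
  by (simp add: polydisc_def)

lemma vec_upd_in_pcball: "z \<in> pcball r \<Longrightarrow> norm w \<le> r \<Longrightarrow> vec_upd z i w \<in> pcball r"
  by (simp add: pcball_def)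

lemma pball_subset_pcball: "pball r \<subseteq> pcball r"
  by (auto simp: pball_def pcball_def less_imp_le)

lemma pcball_subset_polydisc: "r < 1 \<Longrightarrow> pcball r \<subseteq> polydisc"
  by (auto simp: pcball_def polydisc_def intro: le_less_trans)

lemma open_pball: "open (pball r)"
proof -
  have "pball r = (\<Inter>j. {z::complex^'n. norm (z $ j) < r})"
    by (auto simp: pball_def)
  also have "open \<dots>"
    by (auto intro!: open_INT open_Collect_less continuous_intros)
  finally show ?thesis .
qed

lemma compact_pcball: "compact (pcball r)"
proof -
  have "pcball r = (\<Inter>j. {z::complex^'n. norm (z $ j) \<le> r})"
    by (auto simp: pcball_def)
  also have "closed \<dots>"
    by (auto intro!: closed_INT closed_Collect_le continuous_intros)
  finally have "closed (pcball r :: (complex^'n) set)" .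
  moreover have "norm z \<le> real CARD('n) * r" if "z \<in> pcball r" for z :: "complex^'n"
  proof -
    have "norm z \<le> (\<Sum>j\<in>UNIV. norm (z $ j))"
      unfolding norm_vec_def by (rule L2_set_le_sum) auto
    also have "\<dots> \<le> (\<Sum>j\<in>(UNIV::'n set). r)"
      using that unfolding pcball_def by (intro sum_mono) blast
    finally show ?thesis by simp
  qed
  then have "bounded (pcball r :: (complex^'n) set)"
    unfolding bounded_iff by blast
  ultimately show ?thesis
    by (simp add: compact_eq_bounded_closed)
qed

lemma polydisc_in_smaller_pball:
  assumes "z \<in> polydisc"
  obtains r where "0 < r" "r < 1" "z \<in> pball r"
proof -
  define m where "m = Max ((\<lambda>j. norm (z $ j)) ` UNIV)"
  have "m \<in> (\<lambda>j. norm (z $ j)) ` UNIV"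
    unfolding m_def by (intro Max_in) auto
  then have "0 \<le> m" "m < 1"
    using assms by (auto simp: polydisc_def)
  then obtain r where "m < r" "r < 1"
    using dense by blast
  moreover have "norm (z $ j) \<le> m" for j
    unfolding m_def by (intro Max_ge) auto
  ultimately show ?thesis
    using \<open>0 \<le> m\<close> by (intro that[of r]) (auto simp: pball_def intro: le_less_trans)
qed

lemma polydisc_eq_Union_pball: "polydisc = (\<Union>r\<in>{0<..<1}. pball r)"
proof
  show "polydisc \<subseteq> (\<Union>r\<in>{0<..<1}. pball r)"
    by (auto elim!: polydisc_in_smaller_pball)
  show "(\<Union>r\<in>{0<..<1}. pball r) \<subseteq> polydisc"
    by (auto simp: pball_def polydisc_def intro: less_trans)
qed

lemma continuous_on_polydisc_if_pcball:
  assumes "\<And>r. 0 < r \<Longrightarrow> r < 1 \<Longrightarrow> continuous_on (pcball r) f"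
  shows "continuous_on polydisc f"
  unfolding polydisc_eq_Union_pball
  by (intro continuous_on_open_UN open_pball) (auto intro: continuous_on_subset[OF assms pball_subset_pcball])

lemma holomorphic_on_ball_if_smaller_balls:
  assumes "\<And>r. 0 < r \<Longrightarrow> r < R \<Longrightarrow> f holomorphic_on ball 0 r"
  shows "f holomorphic_on ball 0 R"
proof -
  have "ball 0 R = (\<Union>r\<in>{0<..<R}. ball (0::complex) r)"
  proof (intro equalityI subsetI)
    fix x :: complex assume "x \<in> ball 0 R"
    then obtain r where "norm x < r" "r < R"
      using dense by auto
    then show "x \<in> (\<Union>r\<in>{0<..<R}. ball 0 r)"
      by (intro UN_I[of r]) (auto intro: le_less_trans[OF norm_ge_zero])
  qed auto
  then show ?thesis
    using holomorphic_on_UN_open[of "{0<..<R}" f "ball 0"] assms by auto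
qed

lemma eventually_at_0_in_punctured_disc: "\<forall>\<^sub>F t in at (0::complex). t \<noteq> 0 \<and> norm t < 1"
  unfolding eventually_at by (intro exI[of _ 1]) auto

lemma holomorphic_on_ball_if_uniform_limit_at_0:
  fixes F :: "complex \<Rightarrow> complex \<Rightarrow> complex"
  assumes hol: "\<And>t. t \<noteq> 0 \<Longrightarrow> norm t < 1 \<Longrightarrow> F t holomorphic_on ball 0 1"
    and "r < 1" and limit: "uniform_limit (cball 0 r) F G (at 0)"
  shows "G holomorphic_on ball 0 r"
proof (rule holomorphic_uniform_limit[OF _ limit])
  have sub: "cball 0 r \<subseteq> ball (0::complex) 1"
    using \<open>r < 1\<close> by auto
  show "\<forall>\<^sub>F t in at 0. continuous_on (cball 0 r) (F t) \<and> F t holomorphic_on ball 0 r"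
    using eventually_at_0_in_punctured_disc
  proof eventually_elim
    case (elim t)
    show ?case
    proof
      show "continuous_on (cball 0 r) (F t)"
        using holomorphic_on_imp_continuous_on[OF hol] elim sub by (auto intro: continuous_on_subset)
      show "F t holomorphic_on ball 0 r"
        using hol elim sub by (auto intro: holomorphic_on_subset[OF _ order_trans[OF ball_subset_cball]])
    qed
  qed
qed auto

lemma uniform_limit_at_0_if_linear_bound:
  fixes F :: "'a::real_normed_vector \<Rightarrow> 'b \<Rightarrow> 'c::metric_space"
  assumes "0 < d"
    and bound: "\<And>t x. t \<noteq> 0 \<Longrightarrow> norm t \<le> d \<Longrightarrow> x \<in> S \<Longrightarrow> dist (F t x) (G x) \<le> C * norm t"
  shows "uniform_limit S F G (at 0)"
  unfolding uniform_limit_at_le_iff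
proof (intro allI impI)
  fix e :: real assume "0 < e"
  define \<delta> where "\<delta> = min d (e / (\<bar>C\<bar> + 1))"
  have "dist (F t x) (G x) \<le> e" if "0 < dist t 0" "dist t 0 < \<delta>" "x \<in> S" for t x
  proof -
    have "dist (F t x) (G x) \<le> C * norm t"
      using that by (intro bound) (auto simp: \<delta>_def)
    also have "\<dots> \<le> (\<bar>C\<bar> + 1) * norm t"
      by (intro mult_right_mono) auto
    also have "\<dots> \<le> e"
      using that by (simp add: \<delta>_def pos_less_divide_eq mult.commute)
    finally show ?thesis .
  qed
  moreover have "0 < \<delta>"
    using \<open>0 < d\<close> \<open>0 < e\<close> by (simp add: \<delta>_def)
  ultimately show "\<exists>\<delta>>0. \<forall>t. 0 < dist t 0 \<and> dist t 0 < \<delta> \<longrightarrow> (\<forall>x\<in>S. dist (F t x) (G x) \<le> e)"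
    by blast
qed

lemma Cauchy_coeff_estimate:
  fixes g :: "complex \<Rightarrow> complex"
  assumes hol: "g holomorphic_on ball 0 R" and "0 < \<rho>" "\<rho> < R"
    and B: "\<And>w. norm w = \<rho> \<Longrightarrow> norm (g w) \<le> B"
  shows "norm ((deriv ^^ k) g 0 / fact k) \<le> B / \<rho> ^ k"
proof -
  have sub: "cball 0 \<rho> \<subseteq> ball (0::complex) R"
    using \<open>\<rho> < R\<close> by auto
  have "norm ((deriv ^^ k) g 0) \<le> fact k * B / \<rho> ^ k"
  proof (rule Cauchy_inequality)
    show "g holomorphic_on ball 0 \<rho>"
      using hol sub by (rule holomorphic_on_subset[OF _ order_trans[OF ball_subset_cball]])
    show "continuous_on (cball 0 \<rho>) g"
      using holomorphic_on_imp_continuous_on[OF hol] sub by (rule continuous_on_subset)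
  qed (use assms in auto)
  then show ?thesis
    by (simp add: norm_divide pos_divide_le_eq field_simps)
qed

lemma Taylor_tail_quotient_sums:
  fixes g :: "complex \<Rightarrow> complex"
  defines "c \<equiv> \<lambda>m. (deriv ^^ m) g 0 / fact m"
  assumes hol: "g holomorphic_on ball 0 R" and t: "t \<in> ball 0 R" "t \<noteq> 0"
  shows "(\<lambda>m. c (m + Suc k) * t ^ m) sums ((g t - (\<Sum>m<Suc k. c m * t ^ m)) / t ^ Suc k)"
proof -
  have "(\<lambda>m. c m * t ^ m) sums g t"
    using holomorphic_power_series[OF hol t(1)] by (simp add: c_def)
  then have "(\<lambda>m. c (m + Suc k) * t ^ (m + Suc k) / t ^ Suc k) sums
               ((g t - (\<Sum>m<Suc k. c m * t ^ m)) / t ^ Suc k)"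
    by (intro sums_divide sums_iff_shift[where f="\<lambda>m. c m * t ^ m" and n="Suc k", THEN iffD2]) simp
  moreover have "(\<lambda>m. c (m + Suc k) * t ^ (m + Suc k) / t ^ Suc k) = (\<lambda>m. c (m + Suc k) * t ^ m)"
    using t(2) by (simp add: fun_eq_iff power_add)
  ultimately show ?thesis
    by (simp only:)
qed

lemma Taylor_quotient_estimate:
  fixes g :: "complex \<Rightarrow> complex"
  defines "c \<equiv> \<lambda>m. (deriv ^^ m) g 0 / fact m"
  assumes hol: "g holomorphic_on ball 0 R" and \<rho>: "0 < \<rho>" "\<rho> < R"
    and B: "\<And>w. norm w = \<rho> \<Longrightarrow> norm (g w) \<le> B"
    and t: "t \<noteq> 0" "norm t \<le> \<rho> / 2"
  shows "norm ((g t - (\<Sum>m<k. c m * t ^ m)) / t ^ k - c k) \<le> 2 * B * norm t / \<rho> ^ Suc k"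
proof -
  define q where "q = norm t / \<rho>"
  have q: "0 \<le> q" "q \<le> 1 / 2"
    using \<rho> t by (auto simp: q_def divide_le_eq)
  have "t \<in> ball 0 R"
    using \<rho> t by auto
  then have tail: "(\<lambda>m. c (m + Suc k) * t ^ m) sums ((g t - (\<Sum>m<Suc k. c m * t ^ m)) / t ^ Suc k)"
    unfolding c_def using hol t(1) by (intro Taylor_tail_quotient_sums)
  have "norm (g (of_real \<rho>)) \<le> B"
    using B \<rho> by simp
  then have "B \<ge> 0"
    by (rule order_trans[OF norm_ge_zero])
  have term_le: "norm (c (m + Suc k) * t ^ m) \<le> B / \<rho> ^ Suc k * q ^ m" for m
  proof -
    have "norm (c (m + Suc k) * t ^ m) \<le> B / \<rho> ^ (m + Suc k) * norm t ^ m"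
      unfolding norm_mult norm_power c_def
      by (intro mult_right_mono Cauchy_coeff_estimate[OF hol \<rho> B]) auto
    also have "\<dots> = B / \<rho> ^ Suc k * q ^ m"
      by (simp add: q_def power_add power_divide)
    finally show ?thesis .
  qed
  have geom: "(\<lambda>m. B / \<rho> ^ Suc k * q ^ m) sums (B / \<rho> ^ Suc k * (1 / (1 - q)))"
    using q by (intro sums_mult geometric_sums) auto
  have "(g t - (\<Sum>m<k. c m * t ^ m)) / t ^ k - c k = t * ((g t - (\<Sum>m<Suc k. c m * t ^ m)) / t ^ Suc k)"
    using t by (simp add: field_simps)
  also have "norm \<dots> \<le> norm t * (B / \<rho> ^ Suc k * (1 / (1 - q)))"
    unfolding norm_mult sums_unique[OF tail] sums_unique[OF geom]
    by (intro mult_left_mono norm_suminf_le term_le sums_summable[OF geom]) auto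
  also have "\<dots> \<le> norm t * (B / \<rho> ^ Suc k * 2)"
    using q \<open>B \<ge> 0\<close> \<rho> by (intro mult_left_mono) (auto simp: divide_le_eq)
  finally show ?thesis
    by (simp add: field_simps)
qed

definition slice :: "(complex^'n \<Rightarrow> 'a) \<Rightarrow> complex^'n \<Rightarrow> 'n \<Rightarrow> complex \<Rightarrow> 'a" where
  "slice h z i = (\<lambda>w. h (vec_upd z i w))"

lemma slice_vec_upd_same [simp]: "slice h (vec_upd z i v) i = slice h z i"
  by (simp add: slice_def fun_eq_iff)

(* Joint continuity is part of the notion since Hartogs' theorem is not available; it provides
   the bounds on compact polydiscs behind all Cauchy estimates. *)
definition cont_sep_holomorphic :: "(complex^'n \<Rightarrow> complex) \<Rightarrow> bool" where
  "cont_sep_holomorphic h \<longleftrightarrow>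
     continuous_on polydisc h \<and> (\<forall>z\<in>polydisc. \<forall>i. slice h z i holomorphic_on ball 0 1)"

lemma holomorphic_n_on_imp_cont_sep_holomorphic:
  assumes "holomorphic_n_on g polydisc"
  shows "cont_sep_holomorphic g"
proof -
  have deriv: "\<exists>L. (g has_derivative L) (at z) \<and> (\<forall>c v. L (c *s v) = c * L v)" if "z \<in> polydisc" for z
    using assms that unfolding holomorphic_n_on_def by blast
  have "continuous_on polydisc g"
    by (meson continuous_at_imp_continuous_on deriv has_derivative_continuous)
  moreover have "slice g z i field_differentiable at w"
    if "z \<in> polydisc" "w \<in> ball 0 1" for z i w
  proof -
    have "vec_upd z i w \<in> polydisc"
      using that by (simp add: vec_upd_in_polydisc)
    then obtain L where L: "(g has_derivative L) (at (vec_upd z i w))" and lin: "\<forall>c v. L (c *s v) = c * L v"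
      using deriv by blast
    have "(slice g z i has_derivative (\<lambda>v. L (v *s axis i 1))) (at w)"
      unfolding slice_def using has_derivative_compose[OF has_derivative_vec_upd L] by (simp add: o_def)
    moreover have "(\<lambda>v. L (v *s axis i 1)) = (\<lambda>v. L (axis i 1) * v)"
      using lin by (simp add: mult.commute)
    ultimately show ?thesis
      unfolding field_differentiable_def has_field_derivative_def by auto
  qed
  ultimately show ?thesis
    by (auto simp: cont_sep_holomorphic_def holomorphic_on_def field_differentiable_at_within)
qed

lemma cont_sep_holomorphic_bounded:
  assumes "cont_sep_holomorphic h" "r < 1"
  obtains B where "0 \<le> B" "\<And>x. x \<in> pcball r \<Longrightarrow> norm (h x) \<le> B"
  using continuous_on_compact_bound[OF compact_pcball continuous_on_subset[OF _ pcball_subset_polydisc]] assms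
  unfolding cont_sep_holomorphic_def by metis

definition taylor_coeff :: "'n \<Rightarrow> nat \<Rightarrow> (complex^'n \<Rightarrow> complex) \<Rightarrow> complex^'n \<Rightarrow> complex" where
  "taylor_coeff i k h z = (deriv ^^ k) (slice h z i) 0 / fact k"

definition taylor_quotient :: "'n \<Rightarrow> nat \<Rightarrow> (complex^'n \<Rightarrow> complex) \<Rightarrow> complex \<Rightarrow> complex^'n \<Rightarrow> complex" where
  "taylor_quotient i k h t z = (slice h z i t - (\<Sum>m<k. taylor_coeff i m h z * t ^ m)) / t ^ k"

lemma taylor_coeff_sums:
  assumes "cont_sep_holomorphic h" "z \<in> polydisc" "norm t < 1"
  shows "(\<lambda>m. taylor_coeff i m h z * t ^ m) sums h (vec_upd z i t)"
  using holomorphic_power_series[of "slice h z i" 0 1 t] assms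
  by (simp add: cont_sep_holomorphic_def taylor_coeff_def slice_def)

lemma norm_taylor_coeff_le:
  assumes h: "cont_sep_holomorphic h" and \<rho>: "0 < \<rho>" "\<rho> < 1"
    and B: "\<And>x. x \<in> pcball \<rho> \<Longrightarrow> norm (h x) \<le> B" and z: "z \<in> pcball \<rho>"
  shows "norm (taylor_coeff i k h z) \<le> B / \<rho> ^ k"
  unfolding taylor_coeff_def
proof (rule Cauchy_coeff_estimate[OF _ \<rho>])
  show "slice h z i holomorphic_on ball 0 1"
    using h z pcball_subset_polydisc[OF \<rho>(2)] by (auto simp: cont_sep_holomorphic_def)
  show "norm (slice h z i w) \<le> B" if "norm w = \<rho>" for w
    using that by (simp add: slice_def B vec_upd_in_pcball[OF z])
qed

lemma norm_taylor_quotient_diff_le: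
  assumes h: "cont_sep_holomorphic h" and \<rho>: "0 < \<rho>" "\<rho> < 1"
    and B: "\<And>x. x \<in> pcball \<rho> \<Longrightarrow> norm (h x) \<le> B" and z: "z \<in> pcball \<rho>"
    and t: "t \<noteq> 0" "norm t \<le> \<rho> / 2"
  shows "norm (taylor_quotient i k h t z - taylor_coeff i k h z) \<le> 2 * B * norm t / \<rho> ^ Suc k"
  unfolding taylor_quotient_def taylor_coeff_def
proof (rule Taylor_quotient_estimate[OF _ \<rho> _ t])
  show "slice h z i holomorphic_on ball 0 1"
    using h z pcball_subset_polydisc[OF \<rho>(2)] by (auto simp: cont_sep_holomorphic_def)
  show "norm (slice h z i w) \<le> B" if "norm w = \<rho>" for w
    using that by (simp add: slice_def B vec_upd_in_pcball[OF z])
qed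

lemma uniform_limit_taylor_quotient:
  assumes h: "cont_sep_holomorphic h" and r: "0 < r" "r < 1"
  shows "uniform_limit (pcball r) (\<lambda>t. taylor_quotient i k h t) (taylor_coeff i k h) (at 0)"
proof -
  obtain B where "\<And>x. x \<in> pcball r \<Longrightarrow> norm (h x) \<le> B"
    using cont_sep_holomorphic_bounded[OF h r(2)] by blast
  from norm_taylor_quotient_diff_le[OF h r this] show ?thesis
    by (intro uniform_limit_at_0_if_linear_bound[where d="r / 2" and C="2 * B / r ^ Suc k"])
       (use r in \<open>auto simp: dist_norm\<close>)
qed

lemma continuous_on_taylor_quotient:
  assumes h: "cont_sep_holomorphic h"
    and coeffs: "\<And>m. m < k \<Longrightarrow> continuous_on polydisc (taylor_coeff i m h)"
    and t: "t \<noteq> 0" "norm t < 1"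
  shows "continuous_on polydisc (taylor_quotient i k h t)"
proof -
  have "continuous_on polydisc (\<lambda>z. h (vec_upd z i t))"
  proof (rule continuous_on_compose2[of polydisc h])
    show "continuous_on polydisc h"
      using h by (simp add: cont_sep_holomorphic_def)
    show "continuous_on polydisc (\<lambda>z. vec_upd z i t)"
      by (intro continuous_intros)
    show "(\<lambda>z. vec_upd z i t) ` polydisc \<subseteq> polydisc"
      using t by (auto intro: vec_upd_in_polydisc)
  qed
  moreover have "continuous_on polydisc (\<lambda>z. \<Sum>m<k. taylor_coeff i m h z * t ^ m)"
    using coeffs by (intro continuous_intros) auto
  ultimately show ?thesis
    unfolding taylor_quotient_def slice_def using t
    by (intro continuous_on_divide continuous_on_diff continuous_on_const) auto
qed

lemma holomorphic_slice_taylor_quotient: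
  assumes h: "cont_sep_holomorphic h"
    and coeffs: "\<And>m. m < k \<Longrightarrow> cont_sep_holomorphic (taylor_coeff i m h)"
    and "j \<noteq> i" and z: "z \<in> polydisc" and t: "t \<noteq> 0" "norm t < 1"
  shows "slice (taylor_quotient i k h t) z j holomorphic_on ball 0 1"
proof -
  have "slice h (vec_upd z i t) j holomorphic_on ball 0 1"
    using h vec_upd_in_polydisc[OF z t(2)] by (simp add: cont_sep_holomorphic_def)
  then have "(\<lambda>v. h (vec_upd (vec_upd z j v) i t)) holomorphic_on ball 0 1"
    by (simp add: slice_def vec_upd_upd_commute[OF \<open>j \<noteq> i\<close>])
  moreover have "(\<lambda>v. taylor_coeff i m h (vec_upd z j v)) holomorphic_on ball 0 1" if "m < k" for m
    using coeffs[OF that] z by (simp add: cont_sep_holomorphic_def slice_def)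
  ultimately show ?thesis
    unfolding slice_def taylor_quotient_def using t by (intro holomorphic_intros) auto
qed

lemma continuous_on_taylor_coeff:
  assumes h: "cont_sep_holomorphic h"
    and coeffs: "\<And>m. m < k \<Longrightarrow> cont_sep_holomorphic (taylor_coeff i m h)"
  shows "continuous_on polydisc (taylor_coeff i k h)"
proof (rule continuous_on_polydisc_if_pcball)
  fix r :: real assume r: "0 < r" "r < 1"
  show "continuous_on (pcball r) (taylor_coeff i k h)"
  proof (rule uniform_limit_theorem[OF _ uniform_limit_taylor_quotient[OF h r]])
    show "\<forall>\<^sub>F t in at 0. continuous_on (pcball r) (taylor_quotient i k h t)"
      using eventually_at_0_in_punctured_disc
    proof eventually_elim
      case (elim t)
      then have "continuous_on polydisc (taylor_quotient i k h t)"
        using coeffs by (intro continuous_on_taylor_quotient h) (auto simp: cont_sep_holomorphic_def)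
      then show ?case
        using pcball_subset_polydisc[OF r(2)] by (rule continuous_on_subset)
    qed
  qed simp
qed

lemma holomorphic_slice_taylor_coeff:
  assumes h: "cont_sep_holomorphic h"
    and coeffs: "\<And>m. m < k \<Longrightarrow> cont_sep_holomorphic (taylor_coeff i m h)"
    and z: "z \<in> polydisc"
  shows "slice (taylor_coeff i k h) z j holomorphic_on ball 0 1"
proof (cases "j = i")
  case True
  then show ?thesis
    by (simp add: slice_def[of "taylor_coeff i k h"] taylor_coeff_def)
next
  case False
  obtain s where s: "0 < s" "s < 1" "z \<in> pball s"
    using polydisc_in_smaller_pball[OF z] by blast
  show ?thesis
  proof (rule holomorphic_on_ball_if_smaller_balls)
    fix r :: real assume r: "0 < r" "r < 1"
    define \<rho> where "\<rho> = max r s"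
    have \<rho>: "0 < \<rho>" "\<rho> < 1"
      using r s by (auto simp: \<rho>_def)
    have "norm (z $ l) \<le> s" for l
      using s(3) by (simp add: pball_def less_imp_le)
    then have "vec_upd z j v \<in> pcball \<rho>" if "v \<in> cball 0 r" for v
      using that by (auto simp: \<rho>_def pcball_def le_max_iff_disj)
    then have "uniform_limit (cball 0 r) (\<lambda>t. slice (taylor_quotient i k h t) z j)
                 (slice (taylor_coeff i k h) z j) (at 0)"
      unfolding slice_def by (intro uniform_limit_compose'[OF uniform_limit_taylor_quotient[OF h \<rho>]]) auto
    then show "slice (taylor_coeff i k h) z j holomorphic_on ball 0 r"
      using holomorphic_slice_taylor_quotient[OF h coeffs False z] r(2)
      by (rule holomorphic_on_ball_if_uniform_limit_at_0[rotated 2])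
  qed
qed

lemma cont_sep_holomorphic_taylor_coeff:
  assumes "cont_sep_holomorphic h"
  shows "cont_sep_holomorphic (taylor_coeff i k h)"
proof (induction k rule: less_induct)
  case (less k)
  show ?case
    unfolding cont_sep_holomorphic_def
    using continuous_on_taylor_coeff[OF assms less.IH] holomorphic_slice_taylor_coeff[OF assms less.IH]
    by blast
qed

lemma borel_measurable_taylor_coeff:
  assumes h: "\<And>\<omega>. \<omega> \<in> space M \<Longrightarrow> cont_sep_holomorphic (h \<omega>)"
    and meas: "\<And>z. z \<in> polydisc \<Longrightarrow> (\<lambda>\<omega>. h \<omega> z) \<in> borel_measurable M"
    and z: "z \<in> polydisc"
  shows "(\<lambda>\<omega>. taylor_coeff i k (h \<omega>) z) \<in> borel_measurable M"
proof (induction k rule: less_induct)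
  case (less k)
  (* measurability only passes to sequential limits *)
  define s :: "nat \<Rightarrow> complex" where "s = (\<lambda>n. inverse (of_nat (n + 2)))"
  have norm_s: "norm (s n) = inverse (real (n + 2))" for n
    unfolding s_def norm_inverse norm_of_nat ..
  have s: "s n \<noteq> 0" "norm (s n) < 1" for n
    using norm_s[of n] by (auto simp: inverse_less_1_iff)
  have s_lim: "filterlim s (at 0) sequentially"
    using LIMSEQ_ignore_initial_segment[OF lim_inverse_n[where 'a=complex], of 2] s
    by (intro filterlim_atI) (auto simp: s_def)
  obtain r where r: "0 < r" "r < 1" "z \<in> pcball r"
    using polydisc_in_smaller_pball[OF z] pball_subset_pcball by blast
  have lim: "(\<lambda>n. taylor_quotient i k (h \<omega>) (s n) z) \<longlonglongrightarrow> taylor_coeff i k (h \<omega>) z"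
    if "\<omega> \<in> space M" for \<omega>
    using tendsto_uniform_limitI[OF uniform_limit_taylor_quotient[OF h[OF that] r(1,2)] r(3)] s_lim
    by (rule filterlim_compose)
  have "(\<lambda>\<omega>. taylor_quotient i k (h \<omega>) (s n) z) \<in> borel_measurable M" for n
    unfolding taylor_quotient_def slice_def
    using meas[OF vec_upd_in_polydisc[OF z s(2)]] less.IH
    by (intro borel_measurable_divide borel_measurable_diff borel_measurable_sum
        borel_measurable_times borel_measurable_const) auto
  then show ?case
    using lim by (rule borel_measurable_LIMSEQ_metric)
qed

primrec iter_coeff :: "'n list \<Rightarrow> nat^'n \<Rightarrow> (complex^'n \<Rightarrow> complex) \<Rightarrow> complex^'n \<Rightarrow> complex" where
  "iter_coeff [] \<alpha> h = h"
| "iter_coeff (i # is) \<alpha> h = iter_coeff is \<alpha> (taylor_coeff i (\<alpha> $ i) h)"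

lemma borel_measurable_iter_coeff:
  assumes "\<And>\<omega>. \<omega> \<in> space M \<Longrightarrow> cont_sep_holomorphic (h \<omega>)"
    and "\<And>z. z \<in> polydisc \<Longrightarrow> (\<lambda>\<omega>. h \<omega> z) \<in> borel_measurable M"
    and z: "z \<in> polydisc"
  shows "(\<lambda>\<omega>. iter_coeff is \<alpha> (h \<omega>) z) \<in> borel_measurable M"
  using assms(1,2)
proof (induction "is" arbitrary: h)
  case Nil
  then show ?case
    using z by simp
next
  case (Cons i "is")
  have "(\<lambda>\<omega>. iter_coeff is \<alpha> (taylor_coeff i (\<alpha> $ i) (h \<omega>)) z) \<in> borel_measurable M"
  proof (rule Cons.IH)
    show "\<And>\<omega>. \<omega> \<in> space M \<Longrightarrow> cont_sep_holomorphic (taylor_coeff i (\<alpha> $ i) (h \<omega>))"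
      by (simp add: Cons.prems(1) cont_sep_holomorphic_taylor_coeff)
    show "\<And>z. z \<in> polydisc \<Longrightarrow> (\<lambda>\<omega>. taylor_coeff i (\<alpha> $ i) (h \<omega>) z) \<in> borel_measurable M"
      by (rule borel_measurable_taylor_coeff[OF Cons.prems])
  qed
  then show ?case
    by simp
qed

lemma norm_iter_coeff_le:
  assumes "distinct is" "cont_sep_holomorphic h" and \<rho>: "0 < \<rho>" "\<rho> < 1"
    and "\<And>x. x \<in> pcball \<rho> \<Longrightarrow> norm (h x) \<le> B" and z: "z \<in> pcball \<rho>"
  shows "norm (iter_coeff is \<alpha> h z) \<le> B / \<rho> ^ (\<Sum>j\<in>set is. \<alpha> $ j)"
  using assms(1,2,5)
proof (induction "is" arbitrary: h B)
  case Nil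
  then show ?case
    using z by simp
next
  case (Cons i "is")
  have "norm (iter_coeff is \<alpha> (taylor_coeff i (\<alpha> $ i) h) z) \<le> B / \<rho> ^ (\<alpha> $ i) / \<rho> ^ (\<Sum>j\<in>set is. \<alpha> $ j)"
    using Cons.prems
    by (intro Cons.IH cont_sep_holomorphic_taylor_coeff norm_taylor_coeff_le[OF _ \<rho>]) auto
  then show ?case
    using Cons.prems(1) by (simp add: power_add divide_divide_eq_left)
qed

lemma iter_coeff_cong: "(\<And>j. j \<in> set is \<Longrightarrow> \<alpha> $ j = \<beta> $ j) \<Longrightarrow> iter_coeff is \<alpha> h = iter_coeff is \<beta> h"
  by (induction "is" arbitrary: h) simp_all

definition independent_of_coord :: "(complex^'n \<Rightarrow> 'a) \<Rightarrow> 'n \<Rightarrow> bool" where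
  "independent_of_coord g j \<longleftrightarrow> (\<forall>x v. g (vec_upd x j v) = g x)"

lemma independent_of_coord_taylor_coeff:
  assumes "j = i \<or> independent_of_coord h j"
  shows "independent_of_coord (taylor_coeff i k h) j"
proof (cases "j = i")
  case False
  with assms have "slice h (vec_upd x j v) i = slice h x i" for x v
    by (simp add: independent_of_coord_def slice_def vec_upd_upd_commute[OF False])
  then show ?thesis
    by (simp add: independent_of_coord_def taylor_coeff_def)
qed (simp add: independent_of_coord_def taylor_coeff_def)

lemma independent_of_coord_iter_coeff:
  "j \<in> set is \<or> independent_of_coord h j \<Longrightarrow> independent_of_coord (iter_coeff is \<alpha> h) j"
  by (induction "is" arbitrary: h) (auto intro: independent_of_coord_taylor_coeff)

lemma const_if_independent_of_all_coords:
  assumes "\<And>j. independent_of_coord g j"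
  shows "g z = g 0"
proof -
  have "g z = g (\<chi> j. if j \<in> S then 0 else z $ j)" if "finite S" for S
    using that
  proof (induction S rule: finite_induct)
    case (insert i S)
    have "(\<chi> j. if j \<in> insert i S then 0 else z $ j) = vec_upd (\<chi> j. if j \<in> S then 0 else z $ j) i 0"
      by (simp add: vec_eq_iff)
    then show ?case
      using insert.IH assms by (simp add: independent_of_coord_def)
  qed simp
  moreover have "(\<chi> j. if j \<in> UNIV then 0 else z $ j) = 0"
    by (simp add: vec_eq_iff)
  ultimately show ?thesis
    by (metis finite_class.finite_UNIV)
qed

definition multi_indices :: "'n set \<Rightarrow> (nat^'n) set" where
  "multi_indices S = {\<alpha>. \<forall>j. j \<notin> S \<longrightarrow> \<alpha> $ j = 0}"

lemma multi_indices_empty: "multi_indices {} = {0}"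
  by (auto simp: multi_indices_def vec_eq_iff)

lemma multi_indices_UNIV: "multi_indices UNIV = UNIV"
  by (simp add: multi_indices_def)

lemma has_sum_multi_indices_insert:
  assumes "i \<notin> S"
  shows "(g has_sum s) (multi_indices (insert i S)) \<longleftrightarrow>
         ((\<lambda>(k, \<beta>). g (vec_upd \<beta> i k)) has_sum s) (UNIV \<times> multi_indices S)"
  by (rule has_sum_reindex_bij_witness[where j="\<lambda>\<alpha>. (\<alpha> $ i, vec_upd \<alpha> i 0)" and i="\<lambda>(k, \<beta>). vec_upd \<beta> i k"])
     (use assms in \<open>auto simp: multi_indices_def vec_eq_iff\<close>)

lemma has_sum_prod_power_multi_indices:
  fixes q :: real
  assumes "finite S" "0 \<le> q" "q < 1"
  shows "((\<lambda>\<alpha>::nat^'n. \<Prod>j\<in>S. q ^ (\<alpha> $ j)) has_sum (1 / (1 - q)) ^ card S) (multi_indices S)"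
  using assms(1)
proof (induction S rule: finite_induct)
  case empty
  then show ?case
    by (simp add: multi_indices_empty has_sum_finite_iff)
next
  case (insert i S)
  define c where "c = (1 / (1 - q)) ^ card S"
  have inner: "((\<lambda>\<beta>. q ^ k * (\<Prod>j\<in>S. q ^ (\<beta> $ j))) has_sum (q ^ k * c)) (multi_indices S)" for k
    unfolding c_def by (rule has_sum_cmult_right[OF insert.IH])
  have outer: "((\<lambda>k. q ^ k * c) has_sum (1 / (1 - q) * c)) UNIV"
    using assms(2,3) by (intro sums_nonneg_imp_has_sum sums_mult2 geometric_sums) (auto simp: c_def)
  have summable: "(\<lambda>(k, \<beta>). q ^ k * (\<Prod>j\<in>S. q ^ (\<beta> $ j))) summable_on UNIV \<times> multi_indices S"
    by (rule summable_on_SigmaI[where g="\<lambda>k. q ^ k * c"])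
       (use inner outer assms(2) in \<open>auto intro!: has_sum_imp_summable mult_nonneg_nonneg prod_nonneg\<close>)
  have "((\<lambda>(k, \<beta>). q ^ k * (\<Prod>j\<in>S. q ^ (\<beta> $ j))) has_sum (1 / (1 - q) * c)) (UNIV \<times> multi_indices S)"
    by (rule has_sum_SigmaI[OF _ outer summable]) (use inner in simp)
  moreover have "(\<Prod>j\<in>S. q ^ (vec_upd \<beta> i k $ j)) = (\<Prod>j\<in>S. q ^ (\<beta> $ j))" for \<beta> k
    using insert.hyps by (intro prod.cong) auto
  ultimately have "((\<lambda>(k, \<beta>). \<Prod>j\<in>insert i S. q ^ (vec_upd \<beta> i k $ j)) has_sum (1 / (1 - q)) ^ card (insert i S))
                     (UNIV \<times> multi_indices S)"
    using insert.hyps by (simp add: c_def)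
  then show ?case
    by (rule has_sum_multi_indices_insert[OF insert.hyps(2), THEN iffD2])
qed

lemma norm_iter_coeff_monomial_le:
  fixes z :: "complex^'n"
  assumes "distinct is" "cont_sep_holomorphic h" and r: "0 < r" "r < \<rho>" "\<rho> < 1"
    and B: "\<And>x. x \<in> pcball \<rho> \<Longrightarrow> norm (h x) \<le> B" and z_r: "\<And>j. norm (z $ j) \<le> r"
  shows "norm (iter_coeff is \<alpha> h z * (\<Prod>j\<in>set is. (z $ j) ^ (\<alpha> $ j))) \<le> B * (\<Prod>j\<in>set is. (r / \<rho>) ^ (\<alpha> $ j))"
proof -
  have z_\<rho>: "z \<in> pcball \<rho>"
    unfolding pcball_def using z_r r(2) by (auto intro: order_trans less_imp_le)
  then have "B \<ge> 0"
    using B norm_ge_zero order_trans by blast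
  have "norm (iter_coeff is \<alpha> h z) \<le> B / (\<Prod>j\<in>set is. \<rho> ^ (\<alpha> $ j))"
    using norm_iter_coeff_le[OF assms(1,2) _ r(3) B z_\<rho>] r by (simp add: power_sum)
  moreover have "norm (\<Prod>j\<in>set is. (z $ j) ^ (\<alpha> $ j)) \<le> (\<Prod>j\<in>set is. r ^ (\<alpha> $ j))"
    unfolding prod_norm[symmetric] norm_power by (intro prod_mono) (auto intro: power_mono z_r)
  ultimately have "norm (iter_coeff is \<alpha> h z * (\<Prod>j\<in>set is. (z $ j) ^ (\<alpha> $ j)))
                     \<le> B / (\<Prod>j\<in>set is. \<rho> ^ (\<alpha> $ j)) * (\<Prod>j\<in>set is. r ^ (\<alpha> $ j))"
    unfolding norm_mult using \<open>B \<ge> 0\<close> r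
    by (intro mult_mono) (auto intro!: divide_nonneg_nonneg prod_nonneg)
  also have "\<dots> = B * (\<Prod>j\<in>set is. (r / \<rho>) ^ (\<alpha> $ j))"
    by (simp add: power_divide prod_dividef)
  finally show ?thesis .
qed

lemma summable_on_iter_coeff_monomials:
  assumes "distinct is" "cont_sep_holomorphic h" "z \<in> polydisc"
  shows "(\<lambda>\<alpha>. iter_coeff is \<alpha> h z * (\<Prod>j\<in>set is. (z $ j) ^ (\<alpha> $ j))) summable_on multi_indices (set is)"
proof -
  obtain r where r: "0 < r" "r < 1" "z \<in> pball r"
    using polydisc_in_smaller_pball[OF assms(3)] by blast
  obtain \<rho> where \<rho>: "r < \<rho>" "\<rho> < 1"
    using dense r(2) by blast
  obtain B where B: "\<And>x. x \<in> pcball \<rho> \<Longrightarrow> norm (h x) \<le> B"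
    using cont_sep_holomorphic_bounded[OF assms(2) \<rho>(2)] by blast
  have "norm (z $ j) \<le> r" for j
    using r(3) by (simp add: pball_def less_imp_le)
  note bound = norm_iter_coeff_monomial_le[OF assms(1,2) r(1) \<rho> B this]
  define q where "q = r / \<rho>"
  have q: "0 \<le> q" "q < 1"
    using r \<rho> by (auto simp: q_def)
  have "(\<lambda>\<alpha>. B * (\<Prod>j\<in>set is. q ^ (\<alpha> $ j))) summable_on multi_indices (set is)"
    using has_sum_cmult_right[OF has_sum_prod_power_multi_indices[OF _ q]] by (auto intro: has_sum_imp_summable)
  then have "(\<lambda>\<alpha>. norm (iter_coeff is \<alpha> h z * (\<Prod>j\<in>set is. (z $ j) ^ (\<alpha> $ j))))
               summable_on multi_indices (set is)"
    by (rule Infinite_Sum.abs_summable_on_comparison_test') (simp add: bound q_def)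
  then show ?thesis
    by (rule abs_summable_summable)
qed

lemma iter_coeff_monomial_vec_upd:
  assumes "i \<notin> set is"
  shows "iter_coeff (i # is) (vec_upd \<beta> i k) h z * (\<Prod>j\<in>set (i # is). (z $ j) ^ (vec_upd \<beta> i k $ j)) =
           iter_coeff is \<beta> (taylor_coeff i k h) z * (\<Prod>j\<in>set is. (z $ j) ^ (\<beta> $ j)) * (z $ i) ^ k"
proof -
  have "iter_coeff is (vec_upd \<beta> i k) (taylor_coeff i k h) = iter_coeff is \<beta> (taylor_coeff i k h)"
    using assms by (intro iter_coeff_cong) auto
  moreover have "(\<Prod>j\<in>set is. (z $ j) ^ (vec_upd \<beta> i k $ j)) = (\<Prod>j\<in>set is. (z $ j) ^ (\<beta> $ j))"
    using assms by (intro prod.cong) auto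
  ultimately show ?thesis
    using assms by (simp add: mult_ac)
qed

lemma has_sum_iter_coeff_monomials:
  assumes "distinct is" "cont_sep_holomorphic h" and z: "z \<in> polydisc"
  shows "((\<lambda>\<alpha>. iter_coeff is \<alpha> h z * (\<Prod>j\<in>set is. (z $ j) ^ (\<alpha> $ j))) has_sum h z) (multi_indices (set is))"
  using assms(1,2)
proof (induction "is" arbitrary: h)
  case Nil
  then show ?case
    by (simp add: multi_indices_empty has_sum_finite_iff)
next
  case (Cons i "is")
  have i: "i \<notin> set is" "distinct is"
    using Cons.prems(1) by auto
  define F where "F = (\<lambda>\<alpha>. iter_coeff (i # is) \<alpha> h z * (\<Prod>j\<in>set (i # is). (z $ j) ^ (\<alpha> $ j)))"
  have F_split: "F (vec_upd \<beta> i k) = iter_coeff is \<beta> (taylor_coeff i k h) z * (\<Prod>j\<in>set is. (z $ j) ^ (\<beta> $ j)) * (z $ i) ^ k"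
    for \<beta> k
    unfolding F_def by (rule iter_coeff_monomial_vec_upd[OF i(1)])
  have inner: "((\<lambda>\<beta>. F (vec_upd \<beta> i k)) has_sum taylor_coeff i k h z * (z $ i) ^ k) (multi_indices (set is))" for k
    unfolding F_split
    by (intro has_sum_cmult_left Cons.IH i(2) cont_sep_holomorphic_taylor_coeff Cons.prems(2))
  define T where "T = infsum F (multi_indices (insert i (set is)))"
  have "F summable_on multi_indices (insert i (set is))"
    using summable_on_iter_coeff_monomials[OF Cons.prems z] by (simp add: F_def)
  then have total: "(F has_sum T) (multi_indices (insert i (set is)))"
    unfolding T_def by (rule has_sum_infsum)
  then have "((\<lambda>(k, \<beta>). F (vec_upd \<beta> i k)) has_sum T) (UNIV \<times> multi_indices (set is))"
    by (rule has_sum_multi_indices_insert[OF i(1), THEN iffD1])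
  then have "((\<lambda>k. taylor_coeff i k h z * (z $ i) ^ k) has_sum T) UNIV"
    by (rule has_sum_SigmaD) (use inner in simp)
  then have "(\<lambda>k. taylor_coeff i k h z * (z $ i) ^ k) sums T"
    by (rule has_sum_imp_sums)
  moreover have "(\<lambda>k. taylor_coeff i k h z * (z $ i) ^ k) sums h z"
    using taylor_coeff_sums[OF Cons.prems(2) z, of "z $ i" i] z by (simp add: polydisc_def)
  ultimately have "T = h z"
    by (rule sums_unique2)
  with total show ?case
    by (simp add: F_def)
qed

theorem theorem4p2:
  fixes M :: "'w measure" and f :: "'w \<Rightarrow> complex^'n \<Rightarrow> complex"
  assumes "random_holomorphic M polydisc f"
  shows "\<exists>a :: nat^'n \<Rightarrow> 'w \<Rightarrow> complex.
           (\<forall>\<alpha>. a \<alpha> \<in> borel_measurable M) \<and>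
           (\<forall>\<omega>\<in>space M. \<forall>z\<in>polydisc.
              ((\<lambda>\<alpha>. a \<alpha> \<omega> * monomial_n z \<alpha>) has_sum f \<omega> z) UNIV)"
proof -
  obtain xs :: "'n list" where xs: "set xs = UNIV" "distinct xs"
    using finite_distinct_list[of "UNIV :: 'n set"] by auto
  have hol: "\<And>\<omega>. \<omega> \<in> space M \<Longrightarrow> cont_sep_holomorphic (f \<omega>)"
    and meas: "\<And>z. z \<in> polydisc \<Longrightarrow> (\<lambda>\<omega>. f \<omega> z) \<in> borel_measurable M"
    using assms holomorphic_n_on_imp_cont_sep_holomorphic by (auto simp: random_holomorphic_def)
  have zero: "(0 :: complex^'n) \<in> polydisc"
    by (simp add: polydisc_def)
  have coeff_const: "iter_coeff xs \<alpha> (f \<omega>) z = iter_coeff xs \<alpha> (f \<omega>) 0" for \<alpha> \<omega> z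
    using xs(1) by (intro const_if_independent_of_all_coords independent_of_coord_iter_coeff) auto
  show ?thesis
  proof (intro exI[of _ "\<lambda>\<alpha> \<omega>. iter_coeff xs \<alpha> (f \<omega>) 0"] conjI allI ballI)
    fix \<alpha>
    show "(\<lambda>\<omega>. iter_coeff xs \<alpha> (f \<omega>) 0) \<in> borel_measurable M"
      by (rule borel_measurable_iter_coeff[OF hol meas zero])
  next
    fix \<omega> and z :: "complex^'n"
    assume \<omega>: "\<omega> \<in> space M" and z: "z \<in> polydisc"
    from has_sum_iter_coeff_monomials[OF xs(2) hol[OF \<omega>] z] show
      "((\<lambda>\<alpha>. iter_coeff xs \<alpha> (f \<omega>) 0 * monomial_n z \<alpha>) has_sum f \<omega> z) UNIV"
      unfolding coeff_const[of _ _ z] xs(1) multi_indices_UNIV monomial_n_def .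
  qed
qed

end
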